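(* Let $C\subset\mathbb{R}^2$ be a strictly convex body and $S\subset\mathbb{R}^2$ a finite point set in $C$-general position. Let $C'$ be a homothet of $C$ whose boundary contains exactly two points $p,q$ of $S$. Then $p$ and $q$ are joined by a path in $D_C(S)$ (with edges drawn as straight segments) that lies entirely in $C'$.
   Context: A convex body is a convex compact set with nonempty interior; it is strictly convex if its boundary contains no segment of positive length. A homothet of $C$ is $\lambda C+x$ with $\lambda>0$. $S$ is in $C$-general position if the boundary of every homothet of $C$ contains at most $4$ points of $S$. The Delaunay graph $D_C(S)$ has vertex set $S$, with $p,q$ adjacent iff some homothet of $C$ contains $p$ and $q$ and no other point of $S$. *)

theory Defs
  imports "HOL-Analysis.Analysis"
begin

definition convex_body :: "(real^2) set \<Rightarrow> bool" where
  "convex_body C \<longleftrightarrow> convex C \<and> compact C \<and> interior C \<noteq> {}"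

definition strictly_convex_body :: "(real^2) set \<Rightarrow> bool" where
  "strictly_convex_body C \<longleftrightarrow> convex_body C \<and>
     (\<forall>a b. closed_segment a b \<subseteq> frontier C \<longrightarrow> a = b)"

definition is_homothet :: "(real^2) set \<Rightarrow> (real^2) set \<Rightarrow> bool" where
  "is_homothet C H \<longleftrightarrow> (\<exists>l x. l > 0 \<and> H = (\<lambda>v. l *\<^sub>R v + x) ` C)"

definition C_general_position :: "(real^2) set \<Rightarrow> (real^2) set \<Rightarrow> bool" where
  "C_general_position C S \<longleftrightarrow>
     (\<forall>H. is_homothet C H \<longrightarrow> finite (frontier H \<inter> S) \<and> card (frontier H \<inter> S) \<le> 4)"

definition delaunay_adj :: "(real^2) set \<Rightarrow> (real^2) set \<Rightarrow> real^2 \<Rightarrow> real^2 \<Rightarrow> bool" where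
  "delaunay_adj C S p q \<longleftrightarrow> p \<in> S \<and> q \<in> S \<and> p \<noteq> q \<and>
     (\<exists>H. is_homothet C H \<and> H \<inter> S = {p, q})"

end

(*
  Any two points a, b of S lying in a homothet H of C are joined in D_C(S) by a path through
  H \<inter> S, whose segments then stay in H by convexity. The proof is by induction on |H \<inter> S|.
  If H \<inter> S = {a, b}, H itself witnesses the edge ab. Otherwise shrink H homothetically, twice,
  until two points m1, m2 of H \<inter> S lie on the boundary of the shrunken copy K. By strict
  convexity the midpoint of a boundary point m of K with any other point of K is interior, so
  a slight enlargement of K about a point just beyond m excludes m but keeps the rest of
  H \<inter> S. Thus both H \<inter> S - {m1} and H \<inter> S - {m2} are cut out by homothets, and a, b are
  connected through a third point of H \<inter> S via whichever of these two sets avoids the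
  endpoint at hand.
*)
theory Submission
  imports Defs
begin

lemma homothety_image_eq:
  fixes S :: "'a::real_vector set"
  shows "(\<lambda>v. l *\<^sub>R v + b) ` S = (+) b ` ((*\<^sub>R) l ` S)"
  unfolding image_image by (simp add: add.commute)

lemma interior_homothety_image:
  fixes S :: "'a::euclidean_space set"
  assumes "l \<noteq> 0"
  shows "interior ((\<lambda>v. l *\<^sub>R v + b) ` S) = (\<lambda>v. l *\<^sub>R v + b) ` interior S"
proof -
  have "inj ((*\<^sub>R) l :: 'a \<Rightarrow> 'a)"
    using assms by (simp add: inj_on_def)
  then show ?thesis
    unfolding homothety_image_eq interior_translation
    by (simp add: interior_injective_linear_image linear_scale_self)
qed

lemma closure_homothety_image:
  fixes S :: "'a::euclidean_space set"
  assumes "l \<noteq> 0"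
  shows "closure ((\<lambda>v. l *\<^sub>R v + b) ` S) = (\<lambda>v. l *\<^sub>R v + b) ` closure S"
proof -
  have "inj ((*\<^sub>R) l :: 'a \<Rightarrow> 'a)"
    using assms by (simp add: inj_on_def)
  then show ?thesis
    unfolding homothety_image_eq closure_translation
    by (simp add: closure_injective_linear_image linear_scale_self)
qed

lemma homothety_vimage_eq_image:
  fixes S :: "'a::real_vector set"
  assumes "\<mu> \<noteq> 0"
  shows "(\<lambda>v. \<mu> *\<^sub>R v + b) -` S = (\<lambda>v. inverse \<mu> *\<^sub>R v + (- inverse \<mu> *\<^sub>R b)) ` S"
proof (intro set_eqI iffI)
  fix y assume "y \<in> (\<lambda>v. \<mu> *\<^sub>R v + b) -` S"
  then show "y \<in> (\<lambda>v. inverse \<mu> *\<^sub>R v + (- inverse \<mu> *\<^sub>R b)) ` S"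
    using assms by (intro image_eqI[of _ _ "\<mu> *\<^sub>R y + b"]) (auto simp: scaleR_add_right)
qed (use assms in \<open>auto simp: scaleR_add_right scaleR_diff_right\<close>)

lemma frontier_homothety_image:
  fixes S :: "'a::euclidean_space set"
  assumes "l \<noteq> 0"
  shows "frontier ((\<lambda>v. l *\<^sub>R v + b) ` S) = (\<lambda>v. l *\<^sub>R v + b) ` frontier S"
proof -
  have "inj (\<lambda>v. l *\<^sub>R v + b)"
    using assms by (simp add: inj_on_def)
  then show ?thesis
    by (simp add: frontier_def closure_homothety_image interior_homothety_image assms image_set_diff)
qed

lemma closed_segment_homothety_image:
  "closed_segment (l *\<^sub>R a + b) (l *\<^sub>R c + b) = (\<lambda>v. l *\<^sub>R v + b) ` closed_segment a c"
  using closed_segment_linear_image[of "(*\<^sub>R) l" a c, OF linear_scale_self]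
    closed_segment_translation[of b "l *\<^sub>R a" "l *\<^sub>R c"]
  by (simp add: image_image add.commute)

lemma is_homothet_trans:
  assumes "is_homothet C D" "is_homothet D E"
  shows "is_homothet C E"
proof -
  obtain l x where "l > 0" "D = (\<lambda>v. l *\<^sub>R v + x) ` C"
    using assms(1) unfolding is_homothet_def by blast
  moreover obtain l' x' where "l' > 0" "E = (\<lambda>v. l' *\<^sub>R v + x') ` D"
    using assms(2) unfolding is_homothet_def by blast
  ultimately have "l' * l > 0" "E = (\<lambda>v. (l' * l) *\<^sub>R v + (l' *\<^sub>R x + x')) ` C"
    by (auto simp: image_image algebra_simps)
  then show ?thesis
    unfolding is_homothet_def by blast
qed

lemma is_homothet_vimage:
  assumes "\<mu> > 0"
  shows "is_homothet D ((\<lambda>v. \<mu> *\<^sub>R v + b) -` D)"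
  unfolding is_homothet_def homothety_vimage_eq_image[OF less_imp_neq[OF assms, symmetric]]
  using assms by (intro exI[where x="inverse \<mu>"] conjI exI[where x="- inverse \<mu> *\<^sub>R b"] refl) simp

lemma interior_homothety_vimage:
  fixes S :: "'a::euclidean_space set"
  assumes "\<mu> \<noteq> 0"
  shows "interior ((\<lambda>v. \<mu> *\<^sub>R v + b) -` S) = (\<lambda>v. \<mu> *\<^sub>R v + b) -` interior S"
  unfolding homothety_vimage_eq_image[OF assms]
  by (rule interior_homothety_image) (simp add: assms)

lemma convex_body_homothet:
  assumes "convex_body C" "is_homothet C H"
  shows "convex_body H"
proof -
  obtain l x where l: "l > 0" and H: "H = (\<lambda>v. l *\<^sub>R v + x) ` C"
    using assms(2) unfolding is_homothet_def by blast
  have "H = (\<lambda>v. x + l *\<^sub>R v) ` C"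
    unfolding H by (simp add: add.commute)
  then have "convex H" "compact H"
    using assms(1) unfolding convex_body_def by (simp_all add: convex_affinity compact_affinity)
  moreover have "interior H \<noteq> {}"
    using assms(1) l
    unfolding H interior_homothety_image[OF less_imp_neq[OF l, symmetric]] convex_body_def by simp
  ultimately show ?thesis
    unfolding convex_body_def by blast
qed

lemma strictly_convex_body_homothet:
  assumes "strictly_convex_body C" "is_homothet C H"
  shows "strictly_convex_body H"
  unfolding strictly_convex_body_def
proof (intro conjI allI impI)
  show "convex_body H"
    using assms convex_body_homothet strictly_convex_body_def by blast
  obtain l x where l: "l > 0" and H: "H = (\<lambda>v. l *\<^sub>R v + x) ` C"
    using assms(2) unfolding is_homothet_def by blast
  have inj: "inj (\<lambda>v. l *\<^sub>R v + x)"
    using l by (simp add: inj_on_def)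
  fix a b
  assume seg: "closed_segment a b \<subseteq> frontier H"
  then have "a \<in> frontier H" "b \<in> frontier H"
    by auto
  then obtain a' b' where a': "a = l *\<^sub>R a' + x" and b': "b = l *\<^sub>R b' + x"
    using l unfolding H by (auto simp: frontier_homothety_image)
  have "closed_segment a' b' \<subseteq> frontier C"
    using seg inj l unfolding a' b' H closed_segment_homothety_image
    by (simp add: frontier_homothety_image inj_image_subset_iff)
  then show "a = b"
    using assms(1) a' b' unfolding strictly_convex_body_def by blast
qed

lemma supporting_hyperplane_boundary_point:
  fixes D :: "'a::euclidean_space set"
  assumes "convex D" "interior D \<noteq> {}" "m \<in> D" "m \<notin> interior D"
  obtains a where "a \<noteq> 0" "\<And>v. v \<in> D \<Longrightarrow> a \<bullet> m \<le> a \<bullet> v"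
  using supporting_hyperplane_rel_boundary[OF assms(1,3)] assms(4)
  by (metis rel_interior_nonempty_interior[OF assms(2)])

lemma strictly_convex_body_midpoint_interior:
  assumes "strictly_convex_body D" "y \<in> D" "m \<in> D" "y \<noteq> m"
  shows "midpoint y m \<in> interior D"
proof (rule ccontr)
  let ?z = "midpoint y m"
  have "convex D" "closed D" "interior D \<noteq> {}"
    using assms(1) compact_imp_closed unfolding strictly_convex_body_def convex_body_def by auto
  have seg_D: "closed_segment y m \<subseteq> D"
    using \<open>convex D\<close> assms(2,3) closed_segment_subset by blast
  then have "?z \<in> D"
    using midpoint_in_closed_segment by blast
  assume "?z \<notin> interior D"
  then obtain a where "a \<noteq> 0" and supp: "\<And>v. v \<in> D \<Longrightarrow> a \<bullet> ?z \<le> a \<bullet> v"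
    using supporting_hyperplane_boundary_point[OF \<open>convex D\<close> \<open>interior D \<noteq> {}\<close> \<open>?z \<in> D\<close>] by blast
  have "a \<bullet> ?z = (a \<bullet> y + a \<bullet> m) / 2"
    by (simp add: midpoint_def inner_add_right)
  then have "y \<in> {v. a \<bullet> v = a \<bullet> ?z}" "m \<in> {v. a \<bullet> v = a \<bullet> ?z}"
    using supp[OF assms(2)] supp[OF assms(3)] by auto
  then have seg_hyperplane: "closed_segment y m \<subseteq> {v. a \<bullet> v = a \<bullet> ?z}"
    by (intro closed_segment_subset convex_hyperplane)
  have "interior D \<subseteq> interior {v. a \<bullet> v \<ge> a \<bullet> ?z}"
    using supp by (intro interior_mono) auto
  then have "interior D \<subseteq> {v. a \<bullet> v > a \<bullet> ?z}"
    using \<open>a \<noteq> 0\<close> by simp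
  then have "closed_segment y m \<inter> interior D = {}"
    using seg_hyperplane by fastforce
  then have "closed_segment y m \<subseteq> frontier D"
    using seg_D \<open>closed D\<close> by (auto simp: frontier_def)
  then show False
    using assms(1,4) unfolding strictly_convex_body_def by blast
qed

lemma eventually_at_right_obtain:
  fixes a :: real
  assumes "eventually P (at_right a)"
  obtains x where "a < x" "P x"
  using eventually_happens'[OF _ eventually_conj[OF eventually_at_right_less assms]] by auto

lemma bounded_line_preimage:
  fixes H :: "'a::real_normed_vector set"
  assumes "bounded H" "y \<noteq> c"
  shows "bounded {t::real. t *\<^sub>R y + (1 - t) *\<^sub>R c \<in> H}"
proof -
  obtain B where B: "\<And>v. v \<in> H \<Longrightarrow> norm v \<le> B"
    using assms(1) bounded_iff by blast
  have "\<bar>t\<bar> \<le> (B + norm c) / norm (y - c)" if "t *\<^sub>R y + (1 - t) *\<^sub>R c \<in> H" for t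
  proof -
    have "\<bar>t\<bar> * norm (y - c) = norm (t *\<^sub>R y + (1 - t) *\<^sub>R c - c)"
      by (simp add: algebra_simps flip: scaleR_diff_right)
    also have "\<dots> \<le> norm (t *\<^sub>R y + (1 - t) *\<^sub>R c) + norm c"
      by (rule norm_triangle_ineq4)
    also have "\<dots> \<le> B + norm c"
      using B[OF that] by simp
    finally show ?thesis
      using assms(2) by (simp add: field_simps)
  qed
  then show ?thesis
    unfolding bounded_iff by auto
qed

lemma larger_blowup_factor:
  fixes H X :: "'a::real_normed_vector set"
  assumes "finite X" "c \<in> H"
    and interior: "\<And>x. x \<in> X \<Longrightarrow> x \<noteq> c \<Longrightarrow> s *\<^sub>R x + (1 - s) *\<^sub>R c \<in> interior H"
  obtains t where "s < t" "\<And>x. x \<in> X \<Longrightarrow> t *\<^sub>R x + (1 - t) *\<^sub>R c \<in> H"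
proof -
  have "eventually (\<lambda>t. t *\<^sub>R x + (1 - t) *\<^sub>R c \<in> H) (at_right s)" if "x \<in> X" for x
  proof (cases "x = c")
    case True
    then show ?thesis
      using assms(2) by (simp add: algebra_simps)
  next
    case False
    have "((\<lambda>t. t *\<^sub>R x + (1 - t) *\<^sub>R c) \<longlongrightarrow> s *\<^sub>R x + (1 - s) *\<^sub>R c) (at_right s)"
      by (intro tendsto_intros)
    then have "eventually (\<lambda>t. t *\<^sub>R x + (1 - t) *\<^sub>R c \<in> interior H) (at_right s)"
      using interior[OF that False] by (rule topological_tendstoD[OF _ open_interior])
    then show ?thesis
      by eventually_elim (use interior_subset in blast)
  qed
  then have "eventually (\<lambda>t. \<forall>x\<in>X. t *\<^sub>R x + (1 - t) *\<^sub>R c \<in> H) (at_right s)"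
    using assms(1) by (intro eventually_ball_finite) auto
  then show ?thesis
    using that by (auto elim: eventually_at_right_obtain)
qed

lemma maximal_blowup_factor:
  fixes H X :: "'a::real_normed_vector set"
  assumes "compact H" "finite X" "X \<subseteq> H" "c \<in> X" "y \<in> X" "y \<noteq> c"
  obtains t0 m where "1 \<le> t0" "\<And>x. x \<in> X \<Longrightarrow> t0 *\<^sub>R x + (1 - t0) *\<^sub>R c \<in> H"
    "m \<in> X" "m \<noteq> c" "t0 *\<^sub>R m + (1 - t0) *\<^sub>R c \<notin> interior H"
proof -
  define T where "T = {t. 1 \<le> t \<and> (\<forall>x\<in>X. t *\<^sub>R x + (1 - t) *\<^sub>R c \<in> H)}"
  have "T \<subseteq> {t. t *\<^sub>R y + (1 - t) *\<^sub>R c \<in> H}"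
    using assms(5) unfolding T_def by blast
  then have "bounded T"
    using bounded_line_preimage[OF compact_imp_bounded[OF assms(1)] assms(6)] bounded_subset by blast
  moreover have "closed T"
  proof -
    have "T = {1..} \<inter> (\<Inter>x\<in>X. (\<lambda>t. t *\<^sub>R x + (1 - t) *\<^sub>R c) -` H)"
      unfolding T_def by auto
    then show ?thesis
      using compact_imp_closed[OF assms(1)] by (auto intro!: closed_vimage continuous_intros)
  qed
  moreover have "1 \<in> T"
    using assms(3) by (auto simp: T_def)
  ultimately obtain t0 where "t0 \<in> T" and t0_max: "\<And>t. t \<in> T \<Longrightarrow> t \<le> t0"
    using compact_attains_sup[of T] compact_eq_bounded_closed by blast
  moreover have "\<exists>m\<in>X. m \<noteq> c \<and> t0 *\<^sub>R m + (1 - t0) *\<^sub>R c \<notin> interior H"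
  proof (rule ccontr)
    assume "\<not> ?thesis"
    then obtain t where "t0 < t" "\<And>x. x \<in> X \<Longrightarrow> t *\<^sub>R x + (1 - t) *\<^sub>R c \<in> H"
      using larger_blowup_factor[OF assms(2), where c=c and H=H and s=t0] assms(3,4) by blast
    then have "t \<in> T"
      using \<open>t0 \<in> T\<close> unfolding T_def by auto
    then show False
      using t0_max \<open>t0 < t\<close> by fastforce
  qed
  ultimately show ?thesis
    using that unfolding T_def by blast
qed

lemma homothet_touching_point:
  fixes H X :: "(real^2) set"
  assumes "convex H" "compact H" "finite X" "X \<subseteq> H" "c \<in> X" "y \<in> X" "y \<noteq> c"
  obtains K m where "is_homothet H K" "K \<subseteq> H" "X \<subseteq> K" "m \<in> X" "m \<noteq> c" "m \<notin> interior K"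
proof -
  obtain t0 m where "1 \<le> t0" and t0_X: "\<And>x. x \<in> X \<Longrightarrow> t0 *\<^sub>R x + (1 - t0) *\<^sub>R c \<in> H"
    and m: "m \<in> X" "m \<noteq> c" "t0 *\<^sub>R m + (1 - t0) *\<^sub>R c \<notin> interior H"
    using maximal_blowup_factor[OF assms(2-7)] by blast
  define K where "K = (\<lambda>v. t0 *\<^sub>R v + (1 - t0) *\<^sub>R c) -` H"
  have "is_homothet H K"
    unfolding K_def using \<open>1 \<le> t0\<close> by (intro is_homothet_vimage) simp
  moreover have "K \<subseteq> H"
  proof
    fix v assume "v \<in> K"
    then have "t0 *\<^sub>R v + (1 - t0) *\<^sub>R c \<in> H"
      unfolding K_def by simp
    have "v = inverse t0 *\<^sub>R (t0 *\<^sub>R v + (1 - t0) *\<^sub>R c) + (1 - inverse t0) *\<^sub>R c"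
      using \<open>1 \<le> t0\<close> by (simp add: algebra_simps)
    also have "\<dots> \<in> H"
      by (rule convexD[OF assms(1) \<open>_ \<in> H\<close> subsetD[OF assms(4,5)]])
        (use \<open>1 \<le> t0\<close> in \<open>auto simp: field_simps\<close>)
    finally show "v \<in> H" .
  qed
  moreover have "X \<subseteq> K" "m \<notin> interior K"
    unfolding K_def using t0_X m(3) \<open>1 \<le> t0\<close> by (auto simp: interior_homothety_vimage)
  ultimately show ?thesis
    using that m(1,2) by blast
qed

lemma homothet_touching_two_points:
  fixes H X :: "(real^2) set"
  assumes "convex_body H" "finite X" "X \<subseteq> H" "a \<in> X" "b \<in> X" "a \<noteq> b"
  obtains K m1 m2 where "is_homothet H K" "K \<subseteq> H" "X \<subseteq> K" "m1 \<in> X" "m2 \<in> X" "m1 \<noteq> m2"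
    "m1 \<notin> interior K" "m2 \<notin> interior K"
proof -
  obtain K1 m1 where K1: "is_homothet H K1" "K1 \<subseteq> H" "X \<subseteq> K1"
    and m1: "m1 \<in> X" "m1 \<noteq> a" "m1 \<notin> interior K1"
    using homothet_touching_point[of H X a b] assms unfolding convex_body_def by blast
  have "convex_body K1"
    using convex_body_homothet[OF assms(1) K1(1)] .
  then obtain K2 m2 where K2: "is_homothet K1 K2" "K2 \<subseteq> K1" "X \<subseteq> K2"
    and m2: "m2 \<in> X" "m2 \<noteq> m1" "m2 \<notin> interior K2"
    using homothet_touching_point[of K1 X m1 a] assms(2,4) K1(3) m1 unfolding convex_body_def by blast
  have "m1 \<notin> interior K2"
    using m1(3) interior_mono[OF K2(2)] by blast
  then show ?thesis
    using that[of K2 m1 m2] is_homothet_trans[OF K1(1) K2(1)] K1 K2 m1 m2 by blast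
qed

lemma midpoints_in_body_beyond_boundary_point:
  fixes D F :: "(real^2) set"
  assumes "strictly_convex_body D" "finite F" "F \<subseteq> D - {m}" "m \<in> D" "m \<notin> interior D"
  obtains a w where "\<And>v. v \<in> D \<Longrightarrow> a \<bullet> m \<le> a \<bullet> v" "a \<bullet> w < a \<bullet> m"
    "\<And>y. y \<in> F \<Longrightarrow> midpoint y w \<in> D"
proof -
  have "convex D" "interior D \<noteq> {}"
    using assms(1) unfolding strictly_convex_body_def convex_body_def by auto
  then obtain a where "a \<noteq> 0" and supp: "\<And>v. v \<in> D \<Longrightarrow> a \<bullet> m \<le> a \<bullet> v"
    using supporting_hyperplane_boundary_point assms(4,5) by blast
  have "eventually (\<lambda>\<delta>. midpoint y (m - \<delta> *\<^sub>R a) \<in> D) (at_right 0)" if "y \<in> F" for y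
  proof -
    have "((\<lambda>\<delta>. midpoint y (m - \<delta> *\<^sub>R a)) \<longlongrightarrow> midpoint y (m - 0 *\<^sub>R a)) (at_right 0)"
      unfolding midpoint_def by (intro tendsto_intros)
    moreover have "midpoint y m \<in> interior D"
      using that assms(1,3,4) strictly_convex_body_midpoint_interior by blast
    ultimately have "eventually (\<lambda>\<delta>. midpoint y (m - \<delta> *\<^sub>R a) \<in> interior D) (at_right 0)"
      by (intro topological_tendstoD) auto
    then show ?thesis
      by eventually_elim (use interior_subset in blast)
  qed
  then have "eventually (\<lambda>\<delta>. \<forall>y\<in>F. midpoint y (m - \<delta> *\<^sub>R a) \<in> D) (at_right 0)"
    using assms(2) by (intro eventually_ball_finite) auto
  then obtain \<delta> :: real where "0 < \<delta>" "\<And>y. y \<in> F \<Longrightarrow> midpoint y (m - \<delta> *\<^sub>R a) \<in> D"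
    by (rule eventually_at_right_obtain) blast
  moreover have "a \<bullet> (m - \<delta> *\<^sub>R a) < a \<bullet> m"
    using \<open>a \<noteq> 0\<close> \<open>0 < \<delta>\<close> by (simp add: inner_diff_right)
  ultimately show ?thesis
    using that supp by blast
qed

lemma small_contraction_keeps_outside:
  fixes D P :: "'a::real_normed_vector set"
  assumes "closed D" "finite P" "P \<inter> D = {}" "0 < r"
  obtains \<kappa> :: real where "0 < \<kappa>" "\<kappa> < r" "\<And>s. s \<in> P \<Longrightarrow> (1 - \<kappa>) *\<^sub>R s + \<kappa> *\<^sub>R w \<notin> D"
proof -
  have "eventually (\<lambda>\<kappa>. (1 - \<kappa>) *\<^sub>R s + \<kappa> *\<^sub>R w \<in> - D) (at_right 0)" if "s \<in> P" for s
  proof -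
    have "((\<lambda>\<kappa>. (1 - \<kappa>) *\<^sub>R s + \<kappa> *\<^sub>R w) \<longlongrightarrow> (1 - 0) *\<^sub>R s + 0 *\<^sub>R w) (at_right 0)"
      by (intro tendsto_intros)
    then show ?thesis
      using that assms(1,3) by (intro topological_tendstoD) auto
  qed
  then have "eventually (\<lambda>\<kappa>. (\<forall>s\<in>P. (1 - \<kappa>) *\<^sub>R s + \<kappa> *\<^sub>R w \<in> - D) \<and> \<kappa> < r) (at_right 0)"
    using assms(2) eventually_at_right_real[OF assms(4)]
    by (intro eventually_conj eventually_ball_finite) (auto elim: eventually_mono)
  then show ?thesis
    using that by (auto elim: eventually_at_right_obtain)
qed

lemma homothet_excluding_boundary_point:
  fixes D S :: "(real^2) set"
  assumes "strictly_convex_body D" "finite S" "m \<in> D" "m \<notin> interior D"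
  obtains E where "is_homothet D E" "E \<inter> S = D \<inter> S - {m}"
proof -
  define F where "F = D \<inter> S - {m}"
  obtain a w where supp: "\<And>v. v \<in> D \<Longrightarrow> a \<bullet> m \<le> a \<bullet> v" and "a \<bullet> w < a \<bullet> m"
    and mid_w: "\<And>y. y \<in> F \<Longrightarrow> midpoint y w \<in> D"
    using midpoints_in_body_beyond_boundary_point[OF assms(1), of F m] assms(2-4)
    unfolding F_def by blast
  have "convex D" "closed D"
    using assms(1) compact_imp_closed unfolding strictly_convex_body_def convex_body_def by auto
  then obtain \<kappa> :: real where "0 < \<kappa>" "\<kappa> < 1/2"
    and outside: "\<And>s. s \<in> S - D \<Longrightarrow> (1 - \<kappa>) *\<^sub>R s + \<kappa> *\<^sub>R w \<notin> D"
    using small_contraction_keeps_outside[of D "S - D" "1/2" w] assms(2) by auto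
  (* E is D enlarged about w. It loses m, whose image lies strictly beyond the supporting line
     at m; it keeps every other y in D \<inter> S, whose image lies between y and midpoint y w; and by
     the choice of \<kappa> it gains no point of S - D. *)
  define E where "E = (\<lambda>v. (1 - \<kappa>) *\<^sub>R v + \<kappa> *\<^sub>R w) -` D"
  have "a \<bullet> ((1 - \<kappa>) *\<^sub>R m + \<kappa> *\<^sub>R w) < a \<bullet> m"
    using mult_strict_left_mono[OF \<open>a \<bullet> w < a \<bullet> m\<close> \<open>0 < \<kappa>\<close>]
    by (simp add: inner_add_right algebra_simps)
  have "is_homothet D E"
    unfolding E_def using \<open>\<kappa> < 1/2\<close> by (intro is_homothet_vimage) simp
  moreover have "E \<inter> S = F"
  proof (intro set_eqI iffI)
    fix y assume y: "y \<in> E \<inter> S"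
    then have "y \<in> D"
      using outside unfolding E_def by blast
    moreover have "y \<noteq> m"
      using supp y \<open>a \<bullet> (_ + _) < a \<bullet> m\<close> unfolding E_def by fastforce
    ultimately show "y \<in> F"
      using y unfolding F_def by blast
  next
    fix y assume "y \<in> F"
    have "(1 - \<kappa>) *\<^sub>R y + \<kappa> *\<^sub>R w = (1 - 2 * \<kappa>) *\<^sub>R y + (2 * \<kappa>) *\<^sub>R midpoint y w"
      by (simp add: midpoint_def algebra_simps flip: scaleR_add_left)
    also have "\<dots> \<in> D"
      using \<open>y \<in> F\<close> mid_w \<open>0 < \<kappa>\<close> \<open>\<kappa> < 1/2\<close> unfolding F_def
      by (intro convexD[OF \<open>convex D\<close>]) auto
    finally show "y \<in> E \<inter> S"
      using \<open>y \<in> F\<close> unfolding E_def F_def by blast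
  qed
  ultimately show ?thesis
    using that unfolding F_def by blast
qed

lemma homothet_two_removable_points:
  fixes C H S :: "(real^2) set"
  assumes "strictly_convex_body C" "finite S" "is_homothet C H"
    and "a \<in> H \<inter> S" "b \<in> H \<inter> S" "a \<noteq> b"
  obtains m1 m2 where "m1 \<in> H \<inter> S" "m2 \<in> H \<inter> S" "m1 \<noteq> m2"
    "\<And>m. m \<in> {m1, m2} \<Longrightarrow> \<exists>E. is_homothet C E \<and> E \<inter> S = H \<inter> S - {m}"
proof -
  have "strictly_convex_body H"
    using strictly_convex_body_homothet[OF assms(1,3)] .
  then obtain K m1 m2 where K: "is_homothet H K" "K \<subseteq> H" "H \<inter> S \<subseteq> K"
    and m: "m1 \<in> H \<inter> S" "m2 \<in> H \<inter> S" "m1 \<noteq> m2" "m1 \<notin> interior K" "m2 \<notin> interior K"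
    using homothet_touching_two_points[of H "H \<inter> S" a b] assms(2,4-6)
    unfolding strictly_convex_body_def by blast
  have "is_homothet C K"
    using is_homothet_trans[OF assms(3) K(1)] .
  have "\<exists>E. is_homothet C E \<and> E \<inter> S = H \<inter> S - {m}" if m_choice: "m \<in> {m1, m2}" for m
  proof -
    obtain E where "is_homothet K E" "E \<inter> S = K \<inter> S - {m}"
      using homothet_excluding_boundary_point[OF _ assms(2), of K m] m_choice m K(3)
        strictly_convex_body_homothet[OF assms(1) \<open>is_homothet C K\<close>] by blast
    moreover have "K \<inter> S = H \<inter> S"
      using K(2,3) by blast
    ultimately show ?thesis
      using is_homothet_trans[OF \<open>is_homothet C K\<close>] by auto
  qed
  then show ?thesis
    using that m(1-3) by blast
qed

lemma rtranclp_connected_avoiding_either: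
  assumes "z \<in> X" "z \<notin> {m1, m2}" "m1 \<noteq> m2"
    and connected_avoiding: "\<And>u v m. u \<in> X - {m} \<Longrightarrow> v \<in> X - {m} \<Longrightarrow> m \<in> {m1, m2} \<Longrightarrow> r\<^sup>*\<^sup>* u v"
    and "a \<in> X" "b \<in> X"
  shows "r\<^sup>*\<^sup>* a b"
proof -
  have "r\<^sup>*\<^sup>* u z \<and> r\<^sup>*\<^sup>* z u" if "u \<in> X" for u
    using connected_avoiding[of u m1 z] connected_avoiding[of z m1 u]
      connected_avoiding[of u m2 z] connected_avoiding[of z m2 u]
      that assms(1-3) by blast
  then have "r\<^sup>*\<^sup>* a z" "r\<^sup>*\<^sup>* z b"
    using assms(5,6) by blast+
  then show ?thesis
    by (rule rtranclp_trans)
qed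

definition delaunay_adj_within :: "(real^2) set \<Rightarrow> (real^2) set \<Rightarrow> (real^2) set \<Rightarrow> real^2 \<Rightarrow> real^2 \<Rightarrow> bool"
  where "delaunay_adj_within C S X u v \<longleftrightarrow> u \<in> X \<and> v \<in> X \<and> delaunay_adj C S u v"

lemma rtranclp_delaunay_adj_within_mono:
  assumes "X \<subseteq> Y" "(delaunay_adj_within C S X)\<^sup>*\<^sup>* u v"
  shows "(delaunay_adj_within C S Y)\<^sup>*\<^sup>* u v"
  using assms(2) by (rule rtranclp_mono[THEN predicate2D, rotated])
    (use assms(1) in \<open>auto simp: delaunay_adj_within_def\<close>)

lemma delaunay_connected_within_homothet:
  assumes "strictly_convex_body C" "finite S"
  shows "is_homothet C H \<Longrightarrow> a \<in> H \<inter> S \<Longrightarrow> b \<in> H \<inter> S \<Longrightarrow>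
    (delaunay_adj_within C S (H \<inter> S))\<^sup>*\<^sup>* a b"
proof (induction "card (H \<inter> S)" arbitrary: H a b rule: less_induct)
  case less
  define X where "X = H \<inter> S"
  have "a \<in> X" "b \<in> X" "finite X"
    using less.prems assms(2) unfolding X_def by auto
  consider "a = b" | "a \<noteq> b" "X = {a, b}" | z where "a \<noteq> b" "z \<in> X" "z \<noteq> a" "z \<noteq> b"
    using \<open>a \<in> X\<close> \<open>b \<in> X\<close> by blast
  then show ?case
  proof cases
    case 1
    then show ?thesis by simp
  next
    case 2
    then have "delaunay_adj_within C S X a b"
      using less.prems unfolding delaunay_adj_within_def delaunay_adj_def X_def by auto
    then show ?thesis
      unfolding X_def by blast
  next
    case (3 z)
    obtain m1 m2 where m: "m1 \<in> X" "m2 \<in> X" "m1 \<noteq> m2"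
      and removable: "\<And>m. m \<in> {m1, m2} \<Longrightarrow> \<exists>E. is_homothet C E \<and> E \<inter> S = X - {m}"
      using homothet_two_removable_points[OF assms less.prems] 3(1) unfolding X_def by blast
    have avoiding: "(delaunay_adj_within C S X)\<^sup>*\<^sup>* u v"
      if uv: "u \<in> X - {m}" "v \<in> X - {m}" and "m \<in> {m1, m2}" for u v m
    proof -
      obtain E where E: "is_homothet C E" "E \<inter> S = X - {m}"
        using removable[OF \<open>m \<in> {m1, m2}\<close>] by blast
      have "card (E \<inter> S) < card (H \<inter> S)"
        unfolding E(2) X_def[symmetric] using \<open>finite X\<close> \<open>m \<in> {m1, m2}\<close> m(1,2)
        by (auto intro: card_Diff1_less)
      then have "(delaunay_adj_within C S (E \<inter> S))\<^sup>*\<^sup>* u v"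
        using less.hyps E uv by blast
      then show ?thesis
        by (rule rtranclp_delaunay_adj_within_mono[rotated]) (use E(2) in auto)
    qed
    obtain z' where "z' \<in> X" "z' \<notin> {m1, m2}"
      using \<open>a \<in> X\<close> \<open>b \<in> X\<close> 3 by blast
    then have "(delaunay_adj_within C S X)\<^sup>*\<^sup>* a b"
      using m(3) avoiding \<open>a \<in> X\<close> \<open>b \<in> X\<close> by (rule rtranclp_connected_avoiding_either)
    then show ?thesis
      unfolding X_def .
  qed
qed

lemma delaunay_walk_of_rtranclp:
  assumes "(delaunay_adj_within C S X)\<^sup>*\<^sup>* a b" "b \<in> X"
  shows "\<exists>xs. xs \<noteq> [] \<and> hd xs = a \<and> last xs = b \<and> set xs \<subseteq> X \<and>
           successively (delaunay_adj_within C S X) xs"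
  using assms(1)
proof (induction rule: converse_rtranclp_induct)
  case base
  then show ?case
    using assms(2) by (intro exI[of _ "[b]"]) auto
next
  case (step a z)
  then obtain xs where "xs \<noteq> []" "hd xs = z" "last xs = b" "set xs \<subseteq> X"
    "successively (delaunay_adj_within C S X) xs"
    by blast
  then show ?case
    using step(1) by (intro exI[of _ "a # xs"]) (auto simp: successively_Cons delaunay_adj_within_def)
qed

theorem mainTheorem18:
  fixes C C' S :: "(real^2) set" and p q :: "real^2"
  assumes "strictly_convex_body C"
    and "finite S"
    and "C_general_position C S"
    and "is_homothet C C'"
    and "p \<noteq> q"
    and "frontier C' \<inter> S = {p, q}"
  shows "\<exists>xs. xs \<noteq> [] \<and> hd xs = p \<and> last xs = q \<and> set xs \<subseteq> S \<and>
           (\<forall>i. Suc i < length xs \<longrightarrow>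
              delaunay_adj C S (xs ! i) (xs ! Suc i) \<and>
              closed_segment (xs ! i) (xs ! Suc i) \<subseteq> C')"
proof -
  have "convex C'" "closed C'"
    using strictly_convex_body_homothet[OF assms(1,4)] compact_imp_closed
    unfolding strictly_convex_body_def convex_body_def by auto
  then have "p \<in> C' \<inter> S" "q \<in> C' \<inter> S"
    using assms(6) frontier_subset_closed by blast+
  then have "(delaunay_adj_within C S (C' \<inter> S))\<^sup>*\<^sup>* p q"
    using delaunay_connected_within_homothet[OF assms(1,2,4)] by blast
  then obtain xs where xs: "xs \<noteq> []" "hd xs = p" "last xs = q" "set xs \<subseteq> C' \<inter> S"
    and edges: "successively (delaunay_adj_within C S (C' \<inter> S)) xs"
    using delaunay_walk_of_rtranclp \<open>q \<in> C' \<inter> S\<close> by blast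
  have "delaunay_adj C S (xs ! i) (xs ! Suc i) \<and> closed_segment (xs ! i) (xs ! Suc i) \<subseteq> C'"
    if "Suc i < length xs" for i
    using successively_nth[OF edges that] \<open>convex C'\<close>
    unfolding delaunay_adj_within_def by (simp add: closed_segment_subset)
  then show ?thesis
    using xs by blast
qed

end
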